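(* Let $M$ be a finite monoid and $k$ a field. If there exist two irreducible elements $p,q\in M$ that are not associates, then the monoid algebra $kM$ is of infinite representation type.
   Context: A non-unit $p$ in a monoid $M$ is irreducible if whenever $p=ab$ with $a,b\in M$, then $a$ is a unit or $b$ is a unit. Two elements $a,b\in M$ are associates if there exist units $u,v\in M$ with $a=ubv$. A finite-dimensional $k$-algebra is of infinite representation type if it has infinitely many isomorphism classes of finite-dimensional indecomposable modules. *)

theory Defs
  imports "Jordan_Normal_Form.Matrix"
begin

definition monoid_unit :: "'m::monoid_mult \<Rightarrow> bool" where
  "monoid_unit u \<longleftrightarrow> (\<exists>v. u * v = 1 \<and> v * u = 1)"

definition monoid_irreducible :: "'m::monoid_mult \<Rightarrow> bool" where
  "monoid_irreducible p \<longleftrightarrow> \<not> monoid_unit p \<and>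
     (\<forall>a b. p = a * b \<longrightarrow> monoid_unit a \<or> monoid_unit b)"

definition monoid_associates :: "'m::monoid_mult \<Rightarrow> 'm \<Rightarrow> bool" where
  "monoid_associates a b \<longleftrightarrow> (\<exists>u v. monoid_unit u \<and> monoid_unit v \<and> a = u * b * v)"

text \<open>Elements of kM are functions M -> k (finite support is automatic since M is finite);
  multiplication is convolution, unit is the indicator of 1.\<close>

definition malg_mult :: "('m::{monoid_mult,finite} \<Rightarrow> 'k::field) \<Rightarrow> ('m \<Rightarrow> 'k) \<Rightarrow> ('m \<Rightarrow> 'k)" where
  "malg_mult f g = (\<lambda>x. \<Sum>(a, b) \<in> {(a, b). a * b = x}. f a * g b)"

definition malg_one :: "'m::{monoid_mult,finite} \<Rightarrow> 'k::field" where
  "malg_one = (\<lambda>x. if x = 1 then 1 else 0)"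

text \<open>A kM-module of k-dimension n is given (after choosing a basis) by the action map,
  a unital k-algebra homomorphism from kM to the n x n matrices over k.\<close>

definition malg_module :: "nat \<Rightarrow> (('m::{monoid_mult,finite} \<Rightarrow> 'k::field) \<Rightarrow> 'k mat) \<Rightarrow> bool" where
  "malg_module n \<phi> \<longleftrightarrow>
     (\<forall>f. \<phi> f \<in> carrier_mat n n) \<and>
     (\<forall>f g. \<phi> (\<lambda>x. f x + g x) = \<phi> f + \<phi> g) \<and>
     (\<forall>c f. \<phi> (\<lambda>x. c * f x) = c \<cdot>\<^sub>m \<phi> f) \<and>
     (\<forall>f g. \<phi> (malg_mult f g) = \<phi> f * \<phi> g) \<and>
     \<phi> malg_one = 1\<^sub>m n"

definition malg_module_iso ::
  "nat \<times> (('m::{monoid_mult,finite} \<Rightarrow> 'k::field) \<Rightarrow> 'k mat) \<Rightarrow> nat \<times> (('m \<Rightarrow> 'k) \<Rightarrow> 'k mat) \<Rightarrow> bool" where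
  "malg_module_iso V W \<longleftrightarrow> fst V = fst W \<and>
     (\<exists>P \<in> carrier_mat (fst V) (fst V). invertible_mat P \<and> (\<forall>f. P * snd V f = snd W f * P))"

definition malg_direct_sum ::
  "nat \<times> (('m::{monoid_mult,finite} \<Rightarrow> 'k::field) \<Rightarrow> 'k mat) \<Rightarrow> nat \<times> (('m \<Rightarrow> 'k) \<Rightarrow> 'k mat)
   \<Rightarrow> nat \<times> (('m \<Rightarrow> 'k) \<Rightarrow> 'k mat)" where
  "malg_direct_sum V W = (fst V + fst W,
     \<lambda>f. four_block_mat (snd V f) (0\<^sub>m (fst V) (fst W)) (0\<^sub>m (fst W) (fst V)) (snd W f))"

definition malg_indecomposable ::
  "nat \<times> (('m::{monoid_mult,finite} \<Rightarrow> 'k::field) \<Rightarrow> 'k mat) \<Rightarrow> bool" where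
  "malg_indecomposable V \<longleftrightarrow> malg_module (fst V) (snd V) \<and> fst V > 0 \<and>
     \<not> (\<exists>U W. malg_module (fst U) (snd U) \<and> malg_module (fst W) (snd W) \<and>
              fst U > 0 \<and> fst W > 0 \<and> malg_module_iso V (malg_direct_sum U W))"

definition malg_infinite_rep_type :: "('m::{monoid_mult,finite} \<Rightarrow> 'k::field) itself \<Rightarrow> bool" where
  "malg_infinite_rep_type _ \<longleftrightarrow>
     infinite ({V :: nat \<times> (('m \<Rightarrow> 'k) \<Rightarrow> 'k mat). malg_indecomposable V}
               // {(V, W). malg_module_iso V W})"

end

(*
  In a finite monoid ab is a unit
  iff a and b are, and ab is an associate of p iff one factor is a unit and the other an associate
  of p. Hence summing the coefficients of an element of kM over the units, over the associates of p
  and over the associates of q is an algebra map kM -> k[a,b]/(a,b)^2. For every n, the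
  (2n+1)-dimensional zigzag representation of the Kronecker quiver is a module over k[a,b]/(a,b)^2;
  a chase through the matrix entries shows that its endomorphism ring has no idempotents besides
  0 and 1. Pulled back to kM these modules are indecomposable, and they are pairwise
  non-isomorphic because their dimensions differ.
*)
theory Submission
  imports Defs
begin

section \<open>Units and associates in a finite monoid\<close>

lemma monoid_unit_one [simp]: "monoid_unit (1::'m::monoid_mult)"
  unfolding monoid_unit_def by simp

lemma monoid_unitE:
  fixes u :: "'m::monoid_mult"
  assumes "monoid_unit u"
  obtains u' where "monoid_unit u'" "u' * u = 1" "u * u' = 1"
  using assms unfolding monoid_unit_def by blast

lemma monoid_unit_mult:
  fixes a b :: "'m::monoid_mult"
  assumes "monoid_unit a" "monoid_unit b"
  shows "monoid_unit (a * b)"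
proof -
  obtain a' b' where "a * a' = 1" "a' * a = 1" "b * b' = 1" "b' * b = 1"
    using assms unfolding monoid_unit_def by blast
  then have "(a * b) * (b' * a') = 1" "(b' * a') * (a * b) = 1"
    by (metis mult.assoc mult_1)+
  then show ?thesis unfolding monoid_unit_def by blast
qed

lemma finite_monoid_inverse_commute:
  fixes x y :: "'m::{monoid_mult,finite}"
  assumes "x * y = 1"
  shows "y * x = 1"
proof -
  have "surj (\<lambda>t. x * t)"
    by (metis assms mult.assoc mult_1 surjI)
  then have "inj (\<lambda>t. x * t)"
    by (simp add: finite_UNIV_surj_inj)
  moreover have "x * (y * x) = x * 1"
    using assms by (simp flip: mult.assoc)
  ultimately show ?thesis
    by (meson injD)
qed

lemma monoid_unit_mult_iff:
  fixes a b :: "'m::{monoid_mult,finite}"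
  shows "monoid_unit (a * b) \<longleftrightarrow> monoid_unit a \<and> monoid_unit b"
proof
  assume "monoid_unit (a * b)"
  then obtain v where "a * (b * v) = 1" "(v * a) * b = 1"
    unfolding monoid_unit_def by (auto simp: mult.assoc)
  then show "monoid_unit a \<and> monoid_unit b"
    unfolding monoid_unit_def by (metis finite_monoid_inverse_commute)
qed (auto intro: monoid_unit_mult)

lemma monoid_associates_refl: "monoid_associates (a::'m::monoid_mult) a"
  unfolding monoid_associates_def monoid_unit_def by (metis mult_1 mult.right_neutral)

lemma monoid_associates_unit_mult:
  fixes a u v :: "'m::monoid_mult"
  assumes "monoid_unit u" "monoid_unit v"
  shows "monoid_associates (u * a * v) a"
  using assms unfolding monoid_associates_def by blast

lemma monoid_associates_sym:
  fixes a b :: "'m::monoid_mult"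
  assumes "monoid_associates a b"
  shows "monoid_associates b a"
proof -
  obtain u v where uv: "monoid_unit u" "monoid_unit v" "a = u * b * v"
    using assms unfolding monoid_associates_def by blast
  obtain u' where u': "monoid_unit u'" "u' * u = 1" using uv(1) by (rule monoid_unitE)
  obtain v' where v': "monoid_unit v'" "v * v' = 1" using uv(2) by (rule monoid_unitE)
  have "b = u' * a * v'"
    using uv(3) u'(2) v'(2) by (simp add: mult.assoc flip: mult.assoc[of u' u])
  with u'(1) v'(1) show ?thesis
    unfolding monoid_associates_def by blast
qed

lemma monoid_associates_trans:
  fixes a b c :: "'m::monoid_mult"
  assumes "monoid_associates a b" "monoid_associates b c"
  shows "monoid_associates a c"
proof -
  obtain u v where uv: "monoid_unit u" "monoid_unit v" "a = u * b * v"
    using assms(1) unfolding monoid_associates_def by blast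
  obtain u' v' where uv': "monoid_unit u'" "monoid_unit v'" "b = u' * c * v'"
    using assms(2) unfolding monoid_associates_def by blast
  have "a = (u * u') * c * (v' * v)"
    using uv(3) uv'(3) by (simp add: mult.assoc)
  then show ?thesis
    unfolding monoid_associates_def using uv uv' by (blast intro: monoid_unit_mult)
qed

lemma monoid_associates_not_unit:
  fixes a p :: "'m::monoid_mult"
  assumes "monoid_irreducible p" "monoid_associates a p"
  shows "\<not> monoid_unit a"
proof
  assume "monoid_unit a"
  obtain u v where "monoid_unit u" "monoid_unit v" "p = u * a * v"
    using monoid_associates_sym[OF assms(2)] unfolding monoid_associates_def by blast
  with \<open>monoid_unit a\<close> have "monoid_unit p"
    by (simp add: monoid_unit_mult)
  with assms(1) show False
    unfolding monoid_irreducible_def by blast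
qed

lemma monoid_associates_mult_iff:
  fixes a b p :: "'m::{monoid_mult,finite}"
  assumes "monoid_irreducible p"
  shows "monoid_associates (a * b) p \<longleftrightarrow>
    monoid_unit a \<and> monoid_associates b p \<or> monoid_associates a p \<and> monoid_unit b"
proof
  assume ab: "monoid_associates (a * b) p"
  then obtain u v where uv: "monoid_unit u" "monoid_unit v" "p = (u * a) * (b * v)"
    using monoid_associates_sym unfolding monoid_associates_def by (metis mult.assoc)
  then have "monoid_unit a \<or> monoid_unit b"
    using assms unfolding monoid_irreducible_def by (metis monoid_unit_mult_iff)
  then show "monoid_unit a \<and> monoid_associates b p \<or> monoid_associates a p \<and> monoid_unit b"
  proof
    assume "monoid_unit a"
    then obtain a' where "monoid_unit a'" "b = a' * (a * b) * 1"
      by (metis monoid_unitE mult.assoc mult_1 mult.right_neutral)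
    then have "monoid_associates b (a * b)"
      using monoid_associates_unit_mult[of a' 1 "a * b"] by simp
    then show ?thesis
      using \<open>monoid_unit a\<close> ab monoid_associates_trans by blast
  next
    assume "monoid_unit b"
    then obtain b' where "monoid_unit b'" "a = 1 * (a * b) * b'"
      by (metis monoid_unitE mult.assoc mult_1 mult.right_neutral)
    then have "monoid_associates a (a * b)"
      using monoid_associates_unit_mult[of 1 b' "a * b"] by simp
    then show ?thesis
      using \<open>monoid_unit b\<close> ab monoid_associates_trans by blast
  qed
next
  assume "monoid_unit a \<and> monoid_associates b p \<or> monoid_associates a p \<and> monoid_unit b"
  then show "monoid_associates (a * b) p"
    using monoid_associates_unit_mult[of a 1 b] monoid_associates_unit_mult[of 1 b a]
    by (auto intro: monoid_associates_trans)
qed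

section \<open>Representations factoring through k[a,b]/(a,b)^2\<close>

lemma sum_malg_mult:
  fixes f g :: "'m::{monoid_mult,finite} \<Rightarrow> 'k::field"
  shows "(\<Sum>z\<in>S. malg_mult f g z) = (\<Sum>(a, b) | a * b \<in> S. f a * g b)"
proof -
  have "(\<Sum>(a, b) | a * b \<in> S. f a * g b) =
      (\<Sum>z\<in>S. \<Sum>(a, b) \<in> {ab \<in> {(a, b). a * b \<in> S}. (\<lambda>(a, b). a * b) ab = z}. f a * g b)"
    by (rule sum.group[symmetric]) auto
  also have "\<dots> = (\<Sum>z\<in>S. malg_mult f g z)"
    unfolding malg_mult_def by (intro sum.cong) auto
  finally show ?thesis ..
qed

lemma sum_units_malg_mult:
  fixes f g :: "'m::{monoid_mult,finite} \<Rightarrow> 'k::field"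
  shows "(\<Sum>z | monoid_unit z. malg_mult f g z) =
    (\<Sum>x | monoid_unit x. f x) * (\<Sum>x | monoid_unit x. g x)"
proof -
  have "{(a, b). a * b \<in> {z. monoid_unit z}} = {x::'m. monoid_unit x} \<times> {x. monoid_unit x}"
    by (auto simp: monoid_unit_mult_iff)
  then show ?thesis
    by (simp add: sum_malg_mult sum_product sum.cartesian_product)
qed

lemma sum_associates_malg_mult:
  fixes f g :: "'m::{monoid_mult,finite} \<Rightarrow> 'k::field"
  assumes "monoid_irreducible p"
  shows "(\<Sum>z | monoid_associates z p. malg_mult f g z) =
    (\<Sum>x | monoid_unit x. f x) * (\<Sum>x | monoid_associates x p. g x) +
    (\<Sum>x | monoid_associates x p. f x) * (\<Sum>x | monoid_unit x. g x)"
proof -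
  let ?U = "{x::'m. monoid_unit x}" and ?P = "{x. monoid_associates x p}"
  have "{(a, b). a * b \<in> ?P} = ?U \<times> ?P \<union> ?P \<times> ?U"
    using monoid_associates_mult_iff[OF assms] by auto
  moreover have "(?U \<times> ?P) \<inter> (?P \<times> ?U) = {}"
    using monoid_associates_not_unit[OF assms] by auto
  ultimately show ?thesis
    by (simp add: sum_malg_mult sum.union_disjoint sum_product sum.cartesian_product)
qed

lemma sum_units_malg_one: "(\<Sum>x | monoid_unit x. malg_one x) = (1::'k::field)"
  by (simp add: malg_one_def)

lemma sum_associates_malg_one:
  assumes "monoid_irreducible (p::'m::{monoid_mult,finite})"
  shows "(\<Sum>x | monoid_associates x p. malg_one x) = (0::'k::field)"
proof -
  have "\<not> monoid_associates 1 p"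
    using monoid_associates_not_unit[OF assms] monoid_unit_one by blast
  then show ?thesis
    by (simp add: malg_one_def)
qed

lemma mult_mat_entry:
  assumes "A \<in> carrier_mat m d" "B \<in> carrier_mat d n" "i < m" "j < n"
  shows "(A * B) $$ (i, j) = (\<Sum>k<d. A $$ (i, k) * B $$ (k, j))"
  using assms by (simp add: scalar_prod_def lessThan_atLeast0)

lemma square_zero_mat_mult:
  fixes A B :: "'k::field mat"
  assumes A: "A \<in> carrier_mat d d" and B: "B \<in> carrier_mat d d"
    and AA: "A * A = 0\<^sub>m d d" and AB: "A * B = 0\<^sub>m d d"
    and BA: "B * A = 0\<^sub>m d d" and BB: "B * B = 0\<^sub>m d d"
  shows "(a1 \<cdot>\<^sub>m 1\<^sub>m d + b1 \<cdot>\<^sub>m A + c1 \<cdot>\<^sub>m B) * (a2 \<cdot>\<^sub>m 1\<^sub>m d + b2 \<cdot>\<^sub>m A + c2 \<cdot>\<^sub>m B) =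
    (a1 * a2) \<cdot>\<^sub>m 1\<^sub>m d + (a1 * b2 + b1 * a2) \<cdot>\<^sub>m A + (a1 * c2 + c1 * a2) \<cdot>\<^sub>m B"
    (is "?X * ?Y = ?Z")
proof (rule eq_matI)
  fix i j
  assume "i < dim_row ?Z" "j < dim_col ?Z"
  then have ij: "i < d" "j < d"
    using A B by auto
  have vanish: "(\<Sum>k<d. X $$ (i, k) * Y $$ (k, j)) = 0"
    if "X * Y = 0\<^sub>m d d" "X \<in> carrier_mat d d" "Y \<in> carrier_mat d d" for X Y :: "'k mat"
    using that ij mult_mat_entry[OF that(2,3) ij] by simp
  have "(?X * ?Y) $$ (i, j) =
      (\<Sum>k<d. ((if i = k then a1 else 0) + b1 * A $$ (i, k) + c1 * B $$ (i, k)) *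
               ((if k = j then a2 else 0) + b2 * A $$ (k, j) + c2 * B $$ (k, j)))"
    using A B ij by (subst mult_mat_entry[where d = d]) (auto intro!: sum.cong)
  also have "\<dots> =
      (\<Sum>k<d. (if k = i then a1 * ((if i = j then a2 else 0) + b2 * A $$ (i, j) + c2 * B $$ (i, j)) else 0)
        + (if k = j then (b1 * A $$ (i, j) + c1 * B $$ (i, j)) * a2 else 0)
        + (b1 * b2 * (A $$ (i, k) * A $$ (k, j)) + b1 * c2 * (A $$ (i, k) * B $$ (k, j))
           + c1 * b2 * (B $$ (i, k) * A $$ (k, j)) + c1 * c2 * (B $$ (i, k) * B $$ (k, j))))"
    by (rule sum.cong) (auto simp: algebra_simps)
  also have "\<dots> = ?Z $$ (i, j)"
    using ij A B vanish[OF AA A A] vanish[OF AB A B] vanish[OF BA B A] vanish[OF BB B B]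
    by (simp add: sum.distrib sum_distrib_left[symmetric] algebra_simps)
  finally show "(?X * ?Y) $$ (i, j) = ?Z $$ (i, j)" .
qed (use A B in auto)

text \<open>For irreducible p and q, summing the coefficients over the units, over the associates of p and
  over the associates of q is an algebra map from kM to k[a,b]/(a,b)^2;
  composing it with a \<mapsto> A, b \<mapsto> B gives a kM-module whenever all products of A and B vanish.\<close>

definition square_zero_rep ::
    "nat \<Rightarrow> 'k::field mat \<Rightarrow> 'k mat \<Rightarrow> 'm \<Rightarrow> 'm \<Rightarrow> ('m::monoid_mult \<Rightarrow> 'k) \<Rightarrow> 'k mat"
  where "square_zero_rep d A B p q f =
    (\<Sum>x | monoid_unit x. f x) \<cdot>\<^sub>m 1\<^sub>m d +
    (\<Sum>x | monoid_associates x p. f x) \<cdot>\<^sub>m A +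
    (\<Sum>x | monoid_associates x q. f x) \<cdot>\<^sub>m B"

lemma malg_module_square_zero_rep:
  fixes p q :: "'m::{monoid_mult,finite}" and A B :: "'k::field mat"
  assumes p: "monoid_irreducible p" and q: "monoid_irreducible q"
    and A: "A \<in> carrier_mat d d" and B: "B \<in> carrier_mat d d"
    and products: "A * A = 0\<^sub>m d d" "A * B = 0\<^sub>m d d" "B * A = 0\<^sub>m d d" "B * B = 0\<^sub>m d d"
  shows "malg_module d (square_zero_rep d A B p q)"
  unfolding malg_module_def
proof (intro conjI allI)
  fix f g :: "'m \<Rightarrow> 'k" and c :: 'k
  show "square_zero_rep d A B p q f \<in> carrier_mat d d"
    using A B by (simp add: square_zero_rep_def)
  show "square_zero_rep d A B p q (\<lambda>x. f x + g x) = square_zero_rep d A B p q f + square_zero_rep d A B p q g"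
    using A B by (intro eq_matI) (auto simp: square_zero_rep_def sum.distrib algebra_simps)
  show "square_zero_rep d A B p q (\<lambda>x. c * f x) = c \<cdot>\<^sub>m square_zero_rep d A B p q f"
    using A B by (intro eq_matI) (auto simp: square_zero_rep_def sum_distrib_left[symmetric] algebra_simps)
  show "square_zero_rep d A B p q (malg_mult f g) = square_zero_rep d A B p q f * square_zero_rep d A B p q g"
    unfolding square_zero_rep_def square_zero_mat_mult[OF A B products]
    by (simp add: sum_units_malg_mult sum_associates_malg_mult p q algebra_simps)
next
  show "square_zero_rep d A B p q malg_one = 1\<^sub>m d"
    using A B by (intro eq_matI) (auto simp: square_zero_rep_def sum_units_malg_one sum_associates_malg_one p q)
qed

lemma square_zero_rep_indicator:
  fixes x p q :: "'m::{monoid_mult,finite}" and A B :: "'k::field mat"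
  shows "square_zero_rep d A B p q (\<lambda>y. if y = x then 1 else 0) =
    (if monoid_unit x then 1 else 0) \<cdot>\<^sub>m 1\<^sub>m d +
    (if monoid_associates x p then 1 else 0) \<cdot>\<^sub>m A +
    (if monoid_associates x q then 1 else 0) \<cdot>\<^sub>m B"
  by (simp add: square_zero_rep_def)

section \<open>Indecomposability through idempotents\<close>

lemma invertible_matE:
  fixes P :: "'a::semiring_1 mat"
  assumes "P \<in> carrier_mat n n" "invertible_mat P"
  obtains Q where "Q \<in> carrier_mat n n" "P * Q = 1\<^sub>m n" "Q * P = 1\<^sub>m n"
proof -
  obtain Q where PQ: "P * Q = 1\<^sub>m n" and QP: "Q * P = 1\<^sub>m (dim_row Q)"
    using assms unfolding invertible_mat_def inverts_mat_def by auto
  have "dim_col Q = n"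
    using PQ by (metis index_mult_mat(3) index_one_mat(3))
  moreover have "dim_row Q = n"
    using QP assms(1) by (metis carrier_matD(2) index_mult_mat(3) index_one_mat(3))
  ultimately show ?thesis
    using that PQ QP by auto
qed

lemma commuting_idempotent_conjugate:
  fixes P Q D :: "'a::comm_ring_1 mat" and \<phi> \<psi> :: "'b \<Rightarrow> 'a mat"
  assumes P: "P \<in> carrier_mat d d" and Q: "Q \<in> carrier_mat d d"
    and PQ: "P * Q = 1\<^sub>m d" and QP: "Q * P = 1\<^sub>m d"
    and \<phi>: "\<And>f. \<phi> f \<in> carrier_mat d d" and \<psi>: "\<And>f. \<psi> f \<in> carrier_mat d d"
    and intertwines: "\<And>f. P * \<phi> f = \<psi> f * P"
    and D: "D \<in> carrier_mat d d" and idempotent: "D * D = D" and commute: "\<And>f. D * \<psi> f = \<psi> f * D"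
  shows "(Q * D * P) * (Q * D * P) = Q * D * P" and "(Q * D * P) * \<phi> f = \<phi> f * (Q * D * P)"
    and "P * (Q * D * P) * Q = D"
proof -
  have mult_d: "X * Y \<in> carrier_mat d d" and assoc_d: "X * Y * Z = X * (Y * Z)"
    if "X \<in> carrier_mat d d" "Y \<in> carrier_mat d d" "Z \<in> carrier_mat d d" for X Y Z :: "'a mat"
    using that by simp_all
  have PQ_cancel: "P * (Q * X) = X" and QP_cancel: "Q * (P * X) = X" if "X \<in> carrier_mat d d" for X
    using assoc_d[OF P Q that] assoc_d[OF Q P that] PQ QP that by simp_all
  have DD: "D * (D * X) = D * X" if "X \<in> carrier_mat d d" for X
    using assoc_d[OF D D that] idempotent by simp
  have D\<psi>: "D * (\<psi> f * X) = \<psi> f * (D * X)" if "X \<in> carrier_mat d d" for f X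
    using assoc_d[OF D \<psi> that] assoc_d[OF \<psi> D that] commute by metis
  have \<phi>_conj: "\<phi> f = Q * (\<psi> f * P)" for f
    using QP_cancel[OF \<phi>[of f]] intertwines[of f] P Q \<psi> by simp
  show "(Q * D * P) * (Q * D * P) = Q * D * P"
    using P Q D by (simp add: PQ_cancel DD mult_d assoc_d)
  show "(Q * D * P) * \<phi> f = \<phi> f * (Q * D * P)"
    unfolding \<phi>_conj using P Q D \<psi> by (simp add: PQ_cancel D\<psi> mult_d assoc_d)
  show "P * (Q * D * P) * Q = D"
    using P Q D PQ by (simp add: PQ_cancel mult_d assoc_d)
qed

text \<open>A splitting V \<cong> U \<oplus> W transports the projection onto U to an idempotent endomorphism
  of V different from 0 and 1.\<close>

lemma malg_indecomposableI:
  fixes \<phi> :: "('m::{monoid_mult,finite} \<Rightarrow> 'k::field) \<Rightarrow> 'k mat"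
  assumes module: "malg_module d \<phi>" and "0 < d"
    and idempotent: "\<And>E. E \<in> carrier_mat d d \<Longrightarrow> E * E = E \<Longrightarrow> (\<And>f. E * \<phi> f = \<phi> f * E) \<Longrightarrow>
      E = 0\<^sub>m d d \<or> E = 1\<^sub>m d"
  shows "malg_indecomposable (d, \<phi>)"
proof -
  have False if U: "malg_module u \<phi>U" and W: "malg_module w \<phi>W" and "0 < u" "0 < w"
    and iso: "malg_module_iso (d, \<phi>) (malg_direct_sum (u, \<phi>U) (w, \<phi>W))"
    for u w and \<phi>U \<phi>W :: "('m \<Rightarrow> 'k) \<Rightarrow> 'k mat"
  proof -
    define \<psi> where "\<psi> f = four_block_mat (\<phi>U f) (0\<^sub>m u w) (0\<^sub>m w u) (\<phi>W f)" for f
    define D :: "'k mat" where "D = four_block_mat (1\<^sub>m u) (0\<^sub>m u w) (0\<^sub>m w u) (0\<^sub>m w w)"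
    have d: "d = u + w"
      using iso by (simp add: malg_module_iso_def malg_direct_sum_def)
    obtain P where P: "P \<in> carrier_mat d d" "invertible_mat P"
      and intertwines: "\<And>f. P * \<phi> f = \<psi> f * P"
      using iso unfolding malg_module_iso_def malg_direct_sum_def \<psi>_def by auto
    obtain Q where Q: "Q \<in> carrier_mat d d" "P * Q = 1\<^sub>m d" "Q * P = 1\<^sub>m d"
      using P by (rule invertible_matE)
    have \<phi>U: "\<phi>U f \<in> carrier_mat u u" and \<phi>W: "\<phi>W f \<in> carrier_mat w w" for f
      using U W unfolding malg_module_def by blast+
    have \<phi>: "\<phi> f \<in> carrier_mat d d" and \<psi>: "\<psi> f \<in> carrier_mat d d"
      and D: "D \<in> carrier_mat d d" for f
      using module \<phi>U \<phi>W unfolding malg_module_def \<psi>_def D_def d by auto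
    have "D * D = D"
      unfolding D_def by (simp add: mult_four_block_mat[of _ u u _ w _ w _ _ u _ w])
    moreover have "D * \<psi> f = \<psi> f * D" for f
      unfolding D_def \<psi>_def using \<phi>U[of f] \<phi>W[of f]
      by (simp add: mult_four_block_mat[of _ u u _ w _ w _ _ u _ w])
    ultimately have conjugate: "(Q * D * P) * (Q * D * P) = Q * D * P"
      "(Q * D * P) * \<phi> f = \<phi> f * (Q * D * P)" "P * (Q * D * P) * Q = D" for f
      using commuting_idempotent_conjugate[where \<phi> = \<phi> and \<psi> = \<psi>, OF P(1) Q \<phi> \<psi> intertwines D]
      by blast+
    have "Q * D * P = 0\<^sub>m d d \<or> Q * D * P = 1\<^sub>m d"
      using conjugate(1,2) P(1) Q(1) D by (intro idempotent) simp_all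
    with conjugate(3) have "D = 0\<^sub>m d d \<or> D = 1\<^sub>m d"
      using P(1) Q by auto
    moreover have "D $$ (0, 0) = 1" "D $$ (u, u) = 0"
      using \<open>0 < u\<close> \<open>0 < w\<close> unfolding D_def by auto
    ultimately show False
      using \<open>0 < w\<close> d by auto
  qed
  then show ?thesis
    using module \<open>0 < d\<close> unfolding malg_indecomposable_def by (metis prod.collapse fst_conv snd_conv)
qed

lemma malg_module_iso_refl:
  fixes V :: "nat \<times> (('m::{monoid_mult,finite} \<Rightarrow> 'k::field) \<Rightarrow> 'k mat)"
  assumes "malg_module (fst V) (snd V)"
  shows "malg_module_iso V V"
proof -
  have "invertible_mat (1\<^sub>m (fst V) :: 'k mat)"
    unfolding invertible_mat_def inverts_mat_def by (auto intro!: exI[of _ "1\<^sub>m (fst V)"])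
  moreover have "snd V f \<in> carrier_mat (fst V) (fst V)" for f
    using assms unfolding malg_module_def by blast
  then have "1\<^sub>m (fst V) * snd V f = snd V f * 1\<^sub>m (fst V)" for f
    by (metis left_mult_one_mat right_mult_one_mat)
  ultimately show ?thesis
    unfolding malg_module_iso_def by auto
qed

section \<open>Zigzag modules\<close>

text \<open>For d = 2n + 1 this is the indecomposable
  representation of dimension vector (n + 1, n) of the Kronecker quiver.\<close>

definition zigzag_a :: "nat \<Rightarrow> 'k::zero_neq_one mat" where
  "zigzag_a d = mat d d (\<lambda>(i, j). if odd j \<and> i + 1 = j then 1 else 0)"

definition zigzag_b :: "nat \<Rightarrow> 'k::zero_neq_one mat" where
  "zigzag_b d = mat d d (\<lambda>(i, j). if odd j \<and> i = j + 1 then 1 else 0)"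

lemma zigzag_carrier [simp]:
  "zigzag_a d \<in> carrier_mat d d" "zigzag_b d \<in> carrier_mat d d"
  by (simp_all add: zigzag_a_def zigzag_b_def)

lemma zigzag_products:
  "zigzag_a d * zigzag_a d = (0\<^sub>m d d :: 'k::field mat)"
  "zigzag_a d * zigzag_b d = (0\<^sub>m d d :: 'k::field mat)"
  "zigzag_b d * zigzag_a d = (0\<^sub>m d d :: 'k::field mat)"
  "zigzag_b d * zigzag_b d = (0\<^sub>m d d :: 'k::field mat)"
  by (auto simp: zigzag_a_def zigzag_b_def scalar_prod_def intro!: eq_matI sum.neutral)

lemma zigzag_a_mult_entry:
  fixes E :: "'k::field mat"
  assumes "E \<in> carrier_mat d n" "r < d" "c < n"
  shows "(zigzag_a d * E) $$ (r, c) = (if even r \<and> r + 1 < d then E $$ (r + 1, c) else 0)"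
proof -
  have "(zigzag_a d * E) $$ (r, c) = (\<Sum>k<d. zigzag_a d $$ (r, k) * E $$ (k, c))"
    by (rule mult_mat_entry) (use assms in auto)
  also have "\<dots> = (\<Sum>k<d. if k = r + 1 then (if even r then E $$ (k, c) else 0) else 0)"
    using assms by (intro sum.cong) (auto simp: zigzag_a_def)
  also have "\<dots> = (if even r \<and> r + 1 < d then E $$ (r + 1, c) else 0)"
    using assms by simp
  finally show ?thesis .
qed

lemma mult_zigzag_a_entry:
  fixes E :: "'k::field mat"
  assumes "E \<in> carrier_mat m d" "r < m" "c < d"
  shows "(E * zigzag_a d) $$ (r, c) = (if odd c then E $$ (r, c - 1) else 0)"
proof -
  have "(E * zigzag_a d) $$ (r, c) = (\<Sum>k<d. E $$ (r, k) * zigzag_a d $$ (k, c))"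
    by (rule mult_mat_entry) (use assms in auto)
  also have "\<dots> = (\<Sum>k<d. if k = c - 1 then (if odd c then E $$ (r, k) else 0) else 0)"
    using assms by (intro sum.cong) (auto simp: zigzag_a_def)
  also have "\<dots> = (if odd c then E $$ (r, c - 1) else 0)"
    using assms by auto
  finally show ?thesis .
qed

lemma zigzag_b_mult_entry:
  fixes E :: "'k::field mat"
  assumes "E \<in> carrier_mat d n" "r < d" "c < n"
  shows "(zigzag_b d * E) $$ (r, c) = (if even r \<and> 0 < r then E $$ (r - 1, c) else 0)"
proof -
  have "(zigzag_b d * E) $$ (r, c) = (\<Sum>k<d. zigzag_b d $$ (r, k) * E $$ (k, c))"
    by (rule mult_mat_entry) (use assms in auto)
  also have "\<dots> = (\<Sum>k<d. if k = r - 1 then (if even r \<and> 0 < r then E $$ (k, c) else 0) else 0)"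
    using assms by (intro sum.cong) (auto simp: zigzag_b_def)
  also have "\<dots> = (if even r \<and> 0 < r then E $$ (r - 1, c) else 0)"
    using assms by auto
  finally show ?thesis .
qed

lemma mult_zigzag_b_entry:
  fixes E :: "'k::field mat"
  assumes "E \<in> carrier_mat m d" "r < m" "c < d"
  shows "(E * zigzag_b d) $$ (r, c) = (if odd c \<and> c + 1 < d then E $$ (r, c + 1) else 0)"
proof -
  have "(E * zigzag_b d) $$ (r, c) = (\<Sum>k<d. E $$ (r, k) * zigzag_b d $$ (k, c))"
    by (rule mult_mat_entry) (use assms in auto)
  also have "\<dots> = (\<Sum>k<d. if k = c + 1 then (if odd c then E $$ (r, k) else 0) else 0)"
    using assms by (intro sum.cong) (auto simp: zigzag_b_def)
  also have "\<dots> = (if odd c \<and> c + 1 < d then E $$ (r, c + 1) else 0)"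
    using assms by simp
  finally show ?thesis .
qed

lemma shift_invariant_eq_diagonal:
  fixes x :: "nat \<Rightarrow> nat \<Rightarrow> 'a::zero"
  assumes shift: "\<And>i j. i < n \<Longrightarrow> j < n \<Longrightarrow> x (Suc i) (Suc j) = x i j"
    and first_row: "\<And>j. 0 < j \<Longrightarrow> j \<le> n \<Longrightarrow> x 0 j = 0"
    and last_row: "\<And>j. j < n \<Longrightarrow> x n j = 0"
    and "i \<le> n" "j \<le> n"
  shows "x i j = (if i = j then x 0 0 else 0)"
proof -
  have diagonal: "x (i + t) (j + t) = x i j" if "i + t \<le> n" "j + t \<le> n" for i j t
    using that by (induction t) (auto simp: shift)
  consider "i = j" | "i < j" | "j < i"
    by linarith
  then show ?thesis
  proof cases
    case 1
    then show ?thesis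
      using diagonal[of 0 i 0] \<open>i \<le> n\<close> by simp
  next
    case 2
    then have "x i j = x 0 (j - i)"
      using diagonal[of 0 i "j - i"] \<open>j \<le> n\<close> by simp
    then show ?thesis
      using first_row[of "j - i"] 2 \<open>j \<le> n\<close> by simp
  next
    case 3
    then have "x i j = x n (j + (n - i))"
      using diagonal[of i "n - i" j] \<open>i \<le> n\<close> by simp
    then show ?thesis
      using last_row[of "j + (n - i)"] 3 \<open>i \<le> n\<close> by simp
  qed
qed

lemma zigzag_commutant_entry:
  fixes E :: "'k::field mat"
  assumes E: "E \<in> carrier_mat (2 * n + 1) (2 * n + 1)"
    and commute_a: "E * zigzag_a (2 * n + 1) = zigzag_a (2 * n + 1) * E"
    and commute_b: "E * zigzag_b (2 * n + 1) = zigzag_b (2 * n + 1) * E"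
    and "r < 2 * n + 1" "c < 2 * n + 1" "\<not> (even r \<and> odd c)"
  shows "E $$ (r, c) = (if r = c then E $$ (0, 0) else 0)"
proof -
  let ?d = "2 * n + 1"
  have a: "(if odd c then E $$ (r, c - 1) else 0) = (if even r \<and> r + 1 < ?d then E $$ (r + 1, c) else 0)"
    if "r < ?d" "c < ?d" for r c
    using arg_cong[OF commute_a, of "\<lambda>M. M $$ (r, c)"]
    by (simp only: mult_zigzag_a_entry[OF E that] zigzag_a_mult_entry[OF E that])
  have b: "(if odd c \<and> c + 1 < ?d then E $$ (r, c + 1) else 0) = (if even r \<and> 0 < r then E $$ (r - 1, c) else 0)"
    if "r < ?d" "c < ?d" for r c
    using arg_cong[OF commute_b, of "\<lambda>M. M $$ (r, c)"]
    by (simp only: mult_zigzag_b_entry[OF E that] zigzag_b_mult_entry[OF E that])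
  have odd_even: "E $$ (2 * i + 1, 2 * j) = 0" if "i < n" "j \<le> n" for i j
    using a[of "2 * i" "2 * j"] that by simp
  have odd_odd: "E $$ (2 * i + 1, 2 * j + 1) = E $$ (2 * i, 2 * j)" if "i < n" "j < n" for i j
    using a[of "2 * i" "2 * j + 1"] that by simp
  have shift: "E $$ (2 * Suc i, 2 * Suc j) = E $$ (2 * i, 2 * j)" if "i < n" "j < n" for i j
    using b[of "2 * i + 2" "2 * j + 1"] odd_odd[OF that] that by simp
  have first_row: "E $$ (0, 2 * j) = 0" if "0 < j" "j \<le> n" for j
    using b[of 0 "2 * j - 1"] that by simp
  have last_row: "E $$ (2 * n, 2 * j) = 0" if "j < n" for j
    using a[of "2 * n" "2 * j + 1"] that by simp
  have "E $$ (2 * i, 2 * j) = (if i = j then E $$ (2 * 0, 2 * 0) else 0)" if "i \<le> n" "j \<le> n" for i j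
    by (rule shift_invariant_eq_diagonal[where x = "\<lambda>i j. E $$ (2 * i, 2 * j)"])
      (use shift first_row last_row that in auto)
  then have even_even: "E $$ (2 * i, 2 * j) = (if i = j then E $$ (0, 0) else 0)" if "i \<le> n" "j \<le> n" for i j
    using that by simp
  show ?thesis
  proof (cases "even r")
    case True
    with assms(6) obtain i j where "r = 2 * i" "c = 2 * j"
      by (auto elim!: evenE)
    then show ?thesis
      using even_even[of i j] assms(4,5) by auto
  next
    case odd_r: False
    then obtain i where i: "r = 2 * i + 1"
      by (auto elim!: oddE)
    consider (even_c) j where "c = 2 * j" | (odd_c) j where "c = 2 * j + 1"
      by (metis evenE oddE)
    then show ?thesis
    proof cases
      case even_c
      then have "r \<noteq> c"
        using odd_r by auto
      then show ?thesis
        using odd_even[of i j] even_c i assms(4,5) by auto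
    next
      case odd_c
      then show ?thesis
        using odd_odd[of i j] even_even[of i j] i assms(4,5) by auto
    qed
  qed
qed

text \<open>E is a scalar plus a matrix N supported on even rows and odd columns, so N * N = 0; then
  idempotency forces the scalar to be 0 or 1, and N = 0.\<close>

lemma idempotent_trivial_if_scalar_outside_even_odd:
  fixes E :: "'k::field mat"
  assumes E: "E \<in> carrier_mat d d" and idempotent: "E * E = E" and "0 < d"
    and scalar: "\<And>r c. r < d \<Longrightarrow> c < d \<Longrightarrow> \<not> (even r \<and> odd c) \<Longrightarrow>
      E $$ (r, c) = (if r = c then E $$ (0, 0) else 0)"
  shows "E = 0\<^sub>m d d \<or> E = 1\<^sub>m d"
proof -
  define l where "l = E $$ (0, 0)"
  have diagonal: "E $$ (r, r) = l" if "r < d" for r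
    using scalar[of r r] that by (auto simp: l_def)
  have vanish: "E $$ (r, k) * E $$ (k, c) = 0" if "r < d" "c < d" "k < d" "k \<noteq> r" "k \<noteq> c" for r c k
    using scalar[of r k] scalar[of k c] that by (cases "even k") auto
  have square: "E $$ (r, c) = (\<Sum>k\<in>{r, c}. E $$ (r, k) * E $$ (k, c))" if "r < d" "c < d" for r c
  proof -
    have "E $$ (r, c) = (\<Sum>k<d. E $$ (r, k) * E $$ (k, c))"
      using mult_mat_entry[OF E E that] idempotent by simp
    also have "\<dots> = (\<Sum>k\<in>{r, c}. E $$ (r, k) * E $$ (k, c))"
      by (rule sum.mono_neutral_right) (use that vanish in auto)
    finally show ?thesis .
  qed
  have "l * l = l"
    using square[of 0 0] \<open>0 < d\<close> by (simp add: l_def)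
  then have l: "l = 0 \<or> l = 1"
    by (metis mult_cancel_left1 mult_zero_left)
  have off_diagonal: "E $$ (r, c) = 0" if "r < d" "c < d" "r \<noteq> c" for r c
  proof -
    have "E $$ (r, c) = l * E $$ (r, c) + E $$ (r, c) * l"
      using square[OF that(1,2)] diagonal that by simp
    then show ?thesis
      using l by (metis add_cancel_left_right add_0 mult_1 mult_1_right mult_zero_left mult_zero_right)
  qed
  have "E = l \<cdot>\<^sub>m 1\<^sub>m d"
    by (rule eq_matI) (use E diagonal off_diagonal in auto)
  with l show ?thesis
    by (auto intro!: eq_matI)
qed

lemma malg_indecomposable_zigzag:
  fixes p q :: "'m::{monoid_mult,finite}"
  assumes p: "monoid_irreducible p" and q: "monoid_irreducible q" and pq: "\<not> monoid_associates p q"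
  shows "malg_indecomposable (2 * n + 1,
    square_zero_rep (2 * n + 1) (zigzag_a (2 * n + 1)) (zigzag_b (2 * n + 1)) p q
      :: ('m \<Rightarrow> 'k::field) \<Rightarrow> 'k mat)"
    (is "malg_indecomposable (?d, ?\<phi>)")
proof (rule malg_indecomposableI)
  show "malg_module ?d ?\<phi>"
    by (rule malg_module_square_zero_rep[OF p q]) (simp_all add: zigzag_products)
  show "0 < ?d"
    by simp
  fix E :: "'k mat"
  assume E: "E \<in> carrier_mat ?d ?d" and idempotent: "E * E = E" and commute: "\<And>f. E * ?\<phi> f = ?\<phi> f * E"
  have "\<not> monoid_unit p" "\<not> monoid_unit q"
    using monoid_associates_not_unit[OF _ monoid_associates_refl] p q by blast+
  moreover have "\<not> monoid_associates q p"
    using pq monoid_associates_sym by blast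
  ultimately have "?\<phi> (\<lambda>y. if y = p then 1 else 0) = zigzag_a ?d"
    and "?\<phi> (\<lambda>y. if y = q then 1 else 0) = zigzag_b ?d"
    unfolding square_zero_rep_indicator using pq monoid_associates_refl
    by (auto simp: zigzag_a_def zigzag_b_def intro!: eq_matI)
  then have "E * zigzag_a ?d = zigzag_a ?d * E" "E * zigzag_b ?d = zigzag_b ?d * E"
    using commute by metis+
  then show "E = 0\<^sub>m ?d ?d \<or> E = 1\<^sub>m ?d"
    by (intro idempotent_trivial_if_scalar_outside_even_odd[OF E idempotent] zigzag_commutant_entry[OF E])
      simp_all
qed

theorem corollary4:
  fixes p q :: "'m::{monoid_mult,finite}"
  assumes "monoid_irreducible p" and "monoid_irreducible q"
    and "\<not> monoid_associates p q"
  shows "malg_infinite_rep_type TYPE('m \<Rightarrow> 'k::field)"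
proof -
  define V where "V n = (2 * n + 1,
    square_zero_rep (2 * n + 1) (zigzag_a (2 * n + 1)) (zigzag_b (2 * n + 1)) p q
      :: ('m \<Rightarrow> 'k) \<Rightarrow> 'k mat)"
    for n
  let ?indecomposables = "{V :: nat \<times> (('m \<Rightarrow> 'k) \<Rightarrow> 'k mat). malg_indecomposable V}"
  let ?iso = "{(V, W). malg_module_iso V W}"
  have indecomposable: "V n \<in> ?indecomposables" for n
    using malg_indecomposable_zigzag[OF assms] by (simp add: V_def)
  have "inj (\<lambda>n. ?iso `` {V n})"
  proof (rule injI)
    fix m n
    assume "?iso `` {V m} = ?iso `` {V n}"
    moreover have "V m \<in> ?iso `` {V m}"
      using indecomposable[of m] malg_module_iso_refl[of "V m"] unfolding malg_indecomposable_def by simp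
    ultimately have "malg_module_iso (V n) (V m)"
      by simp
    then show "m = n"
      by (simp add: malg_module_iso_def V_def)
  qed
  moreover have "?iso `` {V n} \<in> ?indecomposables // ?iso" for n
    using indecomposable by (rule quotientI)
  ultimately have "infinite (?indecomposables // ?iso)"
    using inj_on_finite[of _ UNIV] by blast
  then show ?thesis
    unfolding malg_infinite_rep_type_def .
qed

end
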